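(* Let $g \in \mathbb{I}_{\geq 1}$, $c \in \mathbb{I}_{\geq g}$, $b \in \mathbb{I}_{\geq c}$ be integers with $c/g \notin \mathbb{I}$, and let $q := \lceil c/g\rceil$. Let $\mathbb{X}_p \subseteq \mathbb{R}^{n_p}$, $\mathbb{U}_p\subseteq\mathbb{R}^{m_p}$ be closed sets containing the origin, let $f_p:\mathbb{R}^{n_p}\times\mathbb{R}^{m_p}\to\mathbb{R}^{n_p}$ with $f_p(0,0)=0$, let $\mathbb{X}_{f,p}\subseteq\mathbb{X}_p$ be closed and contain the origin, and let $k_p:\mathbb{X}_{f,p}\to\mathbb{U}_p$. Consider the system $x^+ = f(x,u)$ with state $x=(x_p,u_s,\beta)$, input $u=(u_c,\gamma)$, $\gamma\in\{0,1\}$, and $$f(x,u) = \big(f_p(x_p,\gamma u_c+(1-\gamma)u_s),\ \gamma u_c+(1-\gamma)u_s,\ \min\{\beta+g-\gamma c,\, b\}\big).$$ Define $\mathbb{X}_f' := \{0\}\times\{0\}\times\mathbb{I}_{[0,c-g-1]}$, $\mathbb{X}_f'' := \mathbb{X}_{f,p}\times\mathbb{U}_p\times\mathbb{I}_{[c-g,b]}$, $\mathbb{X}_f := \mathbb{X}_f'\cup\mathbb{X}_f''$, the terminal control sequence $\kappa_0(x) := (0,0)$ if $x\in\mathbb{X}_f'$, $\kappa_0(x):=(k_p(x_p),1)$ if $x\in\mathbb{X}_f''$, and $\kappa_j(x):=(0,0)$ for $j\in\mathbb{I}_{[1,q-1]}$; define $f_0(x):=x$ and $f_i(x) := f\big(f_{i-1}(x),\kappa_{(i-1)\bmod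 q}(f_{i-1}(x))\big)$, and let $f_{\beta,i}(x)$ denote the last (bucket) component of $f_i(x)$. For $\sigma>0$ let $V_{f,\beta}(\beta):=\sigma(b^2-\beta^2)$. Then there exists $\alpha:\mathbb{I}_{[0,b]}\to\mathbb{R}$ with $\alpha(b)=0$ and $\alpha(\beta)>0$ for all $\beta\in\mathbb{I}_{[0,b-1]}$ such that for all $x=(x_p,u_s,\beta)\in\mathbb{X}_f$, $$V_{f,\beta}(f_{\beta,q}(x)) - V_{f,\beta}(\beta) \leq -\alpha(\beta).$$
   Context: $\mathbb{I}$ denotes the integers, $\mathbb{I}_{[a,b]} := \mathbb{I}\cap[a,b]$, $\mathbb{I}_{\geq a}:=\mathbb{I}\cap[a,\infty)$. The component $\beta$ models the token level of a token bucket with bucket size $b$, token generation rate $g$ per step and transmission cost $c$; $\gamma=1$ indicates a transmission. *)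

theory Defs
  imports "HOL-Analysis.Analysis"
begin

definition tb_f :: "(real^'n \<Rightarrow> real^'m \<Rightarrow> real^'n) \<Rightarrow> int \<Rightarrow> int \<Rightarrow> int \<Rightarrow>
    ((real^'n) \<times> (real^'m) \<times> int) \<Rightarrow> ((real^'m) \<times> int) \<Rightarrow> ((real^'n) \<times> (real^'m) \<times> int)" where
  "tb_f fp g c b x u =
     (let (xp, us, \<beta>) = x; (uc, \<gamma>) = u;
          v = real_of_int \<gamma> *\<^sub>R uc + (1 - real_of_int \<gamma>) *\<^sub>R us
      in (fp xp v, v, min (\<beta> + g - \<gamma> * c) b))"

definition Xf1 :: "int \<Rightarrow> int \<Rightarrow> ((real^'n) \<times> (real^'m) \<times> int) set" where
  "Xf1 g c = {0} \<times> {0} \<times> {0..c - g - 1}"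

definition Xf2 :: "(real^'n) set \<Rightarrow> (real^'m) set \<Rightarrow> int \<Rightarrow> int \<Rightarrow> int \<Rightarrow>
    ((real^'n) \<times> (real^'m) \<times> int) set" where
  "Xf2 Xfp Up g c b = Xfp \<times> Up \<times> {c - g..b}"

definition Xf :: "(real^'n) set \<Rightarrow> (real^'m) set \<Rightarrow> int \<Rightarrow> int \<Rightarrow> int \<Rightarrow>
    ((real^'n) \<times> (real^'m) \<times> int) set" where
  "Xf Xfp Up g c b = Xf1 g c \<union> Xf2 Xfp Up g c b"

text \<open>Terminal control sequence kappa_j; kappa_0 outside X_f is irrelevant (set to (0,0)).\<close>
definition kappa :: "(real^'n \<Rightarrow> real^'m) \<Rightarrow> (real^'n) set \<Rightarrow> (real^'m) set \<Rightarrow> int \<Rightarrow> int \<Rightarrow> int \<Rightarrow>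
    nat \<Rightarrow> ((real^'n) \<times> (real^'m) \<times> int) \<Rightarrow> ((real^'m) \<times> int)" where
  "kappa kp Xfp Up g c b j x =
     (if j = 0 \<and> x \<in> Xf2 Xfp Up g c b then (kp (fst x), 1) else (0, 0))"

definition tb_q :: "int \<Rightarrow> int \<Rightarrow> nat" where
  "tb_q g c = nat \<lceil>real_of_int c / real_of_int g\<rceil>"

fun tb_fi :: "(real^'n \<Rightarrow> real^'m \<Rightarrow> real^'n) \<Rightarrow> (real^'n \<Rightarrow> real^'m) \<Rightarrow> (real^'n) set \<Rightarrow>
    (real^'m) set \<Rightarrow> int \<Rightarrow> int \<Rightarrow> int \<Rightarrow> nat \<Rightarrow> ((real^'n) \<times> (real^'m) \<times> int) \<Rightarrow> ((real^'n) \<times> (real^'m) \<times> int)" where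
  "tb_fi fp kp Xfp Up g c b 0 x = x"
| "tb_fi fp kp Xfp Up g c b (Suc i) x =
     (let y = tb_fi fp kp Xfp Up g c b i x
      in tb_f fp g c b y (kappa kp Xfp Up g c b (i mod tb_q g c) y))"

definition Vfb :: "real \<Rightarrow> int \<Rightarrow> int \<Rightarrow> real" where
  "Vfb \<sigma> b \<beta> = \<sigma> * (real_of_int b ^ 2 - real_of_int \<beta> ^ 2)"

end

theory Submission
  imports Defs
begin

text \<open>Only the bucket component matters. During one period of q steps the bucket
receives q g tokens and pays the cost c at most once (at the first step, and only from
X_f''). Since c/g is not an integer, q g > c, so the bucket rises by at least one token
unless it saturates at b. As V_{f,beta} is strictly decreasing on nonnegative levels,
alpha(beta) := V_{f,beta}(beta) - V_{f,beta}(min(beta + 1, b)) does the job.\<close>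

lemma tb_q_mult_gt:
  assumes "g > 0" and "real_of_int c / real_of_int g \<notin> \<int>"
  shows "c < int (tb_q g c) * g"
proof -
  have "real_of_int c / real_of_int g \<noteq> real_of_int \<lceil>real_of_int c / real_of_int g\<rceil>"
    using assms(2) by (metis Ints_of_int)
  then have "real_of_int c / real_of_int g < real_of_int \<lceil>real_of_int c / real_of_int g\<rceil>"
    using le_of_int_ceiling order_le_neq_trans by blast
  then have "real_of_int c < real_of_int (\<lceil>real_of_int c / real_of_int g\<rceil> * g)"
    using assms(1) by (simp add: divide_less_eq)
  then have "c < \<lceil>real_of_int c / real_of_int g\<rceil> * g"
    by linarith
  also have "\<dots> \<le> int (tb_q g c) * g"
    using assms(1) by (simp add: tb_q_def)
  finally show ?thesis .
qed

lemma tb_f_bucket: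
  "snd (snd (tb_f fp g c b x (u, \<gamma>))) = min (snd (snd x) + g - \<gamma> * c) b"
  by (cases x) (simp add: tb_f_def Let_def)

lemma tb_fi_bucket_Suc:
  assumes "i < tb_q g c"
  shows "snd (snd (tb_fi fp kp Xfp Up g c b (Suc i) x)) =
           min (snd (snd (tb_fi fp kp Xfp Up g c b i x)) + g
                - (if i = 0 \<and> x \<in> Xf2 Xfp Up g c b then c else 0)) b"
  using assms by (cases "i = 0") (auto simp: Let_def kappa_def tb_f_bucket)

text \<open>Clipping at b commutes with the later additions of g \<ge> 0, so a single clip remains.\<close>

lemma tb_fi_bucket:
  assumes "g \<ge> 0" and "i < tb_q g c"
  shows "snd (snd (tb_fi fp kp Xfp Up g c b (Suc i) x)) =
           min (snd (snd x) + int (Suc i) * g - (if x \<in> Xf2 Xfp Up g c b then c else 0)) b"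
  using assms(2)
proof (induction i)
  case 0
  then show ?case
    using tb_fi_bucket_Suc[of 0 g c fp kp Xfp Up b x] by simp
next
  case (Suc i)
  then show ?case
    using tb_fi_bucket_Suc[of "Suc i" g c fp kp Xfp Up b x] assms(1)
    by (auto simp: min_def algebra_simps)
qed

lemma tb_fi_bucket_increase:
  assumes "g \<ge> 0" and "c \<ge> 0" and "c < int (tb_q g c) * g"
  shows "min (snd (snd x) + 1) b \<le> snd (snd (tb_fi fp kp Xfp Up g c b (tb_q g c) x))"
proof -
  obtain i where i: "tb_q g c = Suc i"
    using assms(2,3) by (cases "tb_q g c") auto
  then show ?thesis
    using tb_fi_bucket[of g i c fp kp Xfp Up b x] assms by (auto simp: min_def)
qed

lemma Xf_bucket_range:
  assumes "x \<in> Xf Xfp Up g c b" and "g \<ge> 0" and "g \<le> c" and "c \<le> b"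
  shows "0 \<le> snd (snd x)" and "snd (snd x) \<le> b"
  using assms by (auto simp: Xf_def Xf1_def Xf2_def)

lemma Vfb_antimono:
  assumes "\<sigma> \<ge> 0" and "0 \<le> \<beta>" and "\<beta> \<le> \<beta>'"
  shows "Vfb \<sigma> b \<beta>' \<le> Vfb \<sigma> b \<beta>"
proof -
  have "real_of_int \<beta> ^ 2 \<le> real_of_int \<beta>' ^ 2"
    using assms(2,3) by (intro power_mono) auto
  then show ?thesis
    using assms(1) by (simp add: Vfb_def mult_left_mono)
qed

lemma Vfb_strict_antimono:
  assumes "\<sigma> > 0" and "0 \<le> \<beta>" and "\<beta> < \<beta>'"
  shows "Vfb \<sigma> b \<beta>' < Vfb \<sigma> b \<beta>"
proof -
  have "real_of_int \<beta> ^ 2 < real_of_int \<beta>' ^ 2"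
    using assms(2,3) by (intro power_strict_mono) auto
  then show ?thesis
    using assms(1) by (simp add: Vfb_def)
qed

theorem lemma2:
  fixes g c b :: int and \<sigma> :: real
    and Xp Xfp :: "(real^'n) set" and Up :: "(real^'m) set"
    and fp :: "real^'n \<Rightarrow> real^'m \<Rightarrow> real^'n" and kp :: "real^'n \<Rightarrow> real^'m"
  assumes "g \<ge> 1" and "c \<ge> g" and "b \<ge> c"
    and "real_of_int c / real_of_int g \<notin> \<int>"
    and "closed Xp" and "0 \<in> Xp" and "closed Up" and "0 \<in> Up"
    and "fp 0 0 = 0"
    and "closed Xfp" and "Xfp \<subseteq> Xp" and "0 \<in> Xfp"
    and "\<forall>xp\<in>Xfp. kp xp \<in> Up"
    and "\<sigma> > 0"
  shows "\<exists>\<alpha> :: int \<Rightarrow> real. \<alpha> b = 0 \<and> (\<forall>\<beta>\<in>{0..b-1}. \<alpha> \<beta> > 0) \<and>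
           (\<forall>x \<in> Xf Xfp Up g c b.
              Vfb \<sigma> b (snd (snd (tb_fi fp kp Xfp Up g c b (tb_q g c) x)))
                - Vfb \<sigma> b (snd (snd x)) \<le> - \<alpha> (snd (snd x)))"
proof -
  define \<alpha> where "\<alpha> \<beta> = Vfb \<sigma> b \<beta> - Vfb \<sigma> b (min (\<beta> + 1) b)" for \<beta>
  have "\<alpha> \<beta> > 0" if "\<beta> \<in> {0..b-1}" for \<beta>
    using that Vfb_strict_antimono[OF assms(14), of \<beta> "\<beta> + 1" b] by (simp add: \<alpha>_def)
  moreover have "Vfb \<sigma> b (snd (snd (tb_fi fp kp Xfp Up g c b (tb_q g c) x)))
                   - Vfb \<sigma> b (snd (snd x)) \<le> - \<alpha> (snd (snd x))"
    if x: "x \<in> Xf Xfp Up g c b" for x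
  proof -
    have "c < int (tb_q g c) * g"
      using assms(1,4) by (simp add: tb_q_mult_gt)
    then have "min (snd (snd x) + 1) b \<le> snd (snd (tb_fi fp kp Xfp Up g c b (tb_q g c) x))"
      using assms(1,2) by (intro tb_fi_bucket_increase) auto
    moreover have "0 \<le> min (snd (snd x) + 1) b"
      using Xf_bucket_range[OF x] assms(1-3) by simp
    ultimately show ?thesis
      using Vfb_antimono[OF less_imp_le[OF assms(14)]] by (fastforce simp: \<alpha>_def)
  qed
  moreover have "\<alpha> b = 0"
    by (simp add: \<alpha>_def)
  ultimately show ?thesis
    by blast
qed

end
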